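(* Let $K$ be a convex body in $\mathbb{R}^d$, $G\subset\operatorname{int}(K)$ a convex body, $0<\alpha\le1$, and $G_+:=\{y\in\operatorname{int}(K):\inf_{g\in G}d_K(y,g)\le\alpha\}$. Then for every $x\in\partial G$ there exists $y\in\partial G_+$ with $d_K(x,y)=\alpha$. In particular, $\partial G\subseteq\{z:\inf_{w\in\partial G_+}d_K(z,w)\le\alpha\}$.
   Context: Hilbert distance: for distinct $x,y\in\operatorname{int}(K)$, with $y'$ (resp. $x'$) where the ray from $x$ through $y$ (resp. $y$ through $x$) meets $\partial K$, $d_K(x,y)=\frac12\ln\left(\frac{\|y-x'\|}{\|x-x'\|}\frac{\|x-y'\|}{\|y-y'\|}\right)$, $d_K(x,x)=0$. *)

theory Defs
  imports "HOL-Analysis.Analysis"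
begin

definition convex_body :: "'a::euclidean_space set \<Rightarrow> bool" where
  "convex_body K \<longleftrightarrow> compact K \<and> convex K \<and> interior K \<noteq> {}"

definition ray_exit :: "'a::euclidean_space set \<Rightarrow> 'a \<Rightarrow> 'a \<Rightarrow> 'a" where
  "ray_exit K p q = (THE z. z \<in> frontier K \<and> (\<exists>t::real. t \<ge> 0 \<and> z = p + t *\<^sub>R (q - p)))"

definition hilbert_dist :: "'a::euclidean_space set \<Rightarrow> 'a \<Rightarrow> 'a \<Rightarrow> real" where
  "hilbert_dist K x y =
     (if x = y then 0 else
       (let y' = ray_exit K x y; x' = ray_exit K y x in
          (1/2) * ln ((norm (y - x') / norm (x - x')) * (norm (x - y') / norm (y - y')))))"

definition hilbert_nbhd :: "'a::euclidean_space set \<Rightarrow> 'a set \<Rightarrow> real \<Rightarrow> 'a set" where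
  "hilbert_nbhd K G \<alpha> = {y \<in> interior K. (INF g\<in>G. hilbert_dist K y g) \<le> \<alpha>}"

end

(* Let x be a boundary point of G and n an outer normal of G at x.  Among the chords of K
   through x, take one maximising (n . d) p q / (p + q), where x - p d and x + q d are its
   ends; a Hahn-Banach sandwich argument then provides supporting hyperplanes {h = 0} and
   {g = 0} of K at the two ends which meet on the supporting hyperplane of G at x (or are
   parallel to it), with h, g affine and h x = g x = 1.  For y on the chord beyond x and
   z in int K, the cross ratio defining d_K(y, z) is at least h y g z / (h z g y), and
   h <= g on the side of the hyperplane containing G.  Hence the distance from y to G is
   attained at x and equals the one-dimensional Hilbert distance from x to y on the chord,
   which increases from 0 to infinity.  The point y at distance alpha from x therefore lies
   in G_+ while the points of the chord beyond it do not, so y is on the boundary of G_+. *)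

theory Submission
  imports Defs
begin

lemma frontier_ray_unique:
  fixes K :: "'a::euclidean_space set"
  assumes K: "convex K" and p: "p \<in> interior K" and "d \<noteq> 0"
    and "0 \<le> t1" "0 \<le> t2" and "p + t1 *\<^sub>R d \<in> frontier K" "p + t2 *\<^sub>R d \<in> frontier K"
  shows "t1 = t2"
proof -
  have "\<not> (s1 < s2)" if s1: "0 \<le> s1" and fr: "p + s1 *\<^sub>R d \<in> frontier K" "p + s2 *\<^sub>R d \<in> frontier K"
    for s1 s2
  proof
    assume "s1 < s2"
    have "s1 \<noteq> 0" using fr(1) p by (auto simp: frontier_def)
    have "p + s1 *\<^sub>R d = (1 - s1/s2) *\<^sub>R p + (s1/s2) *\<^sub>R (p + s2 *\<^sub>R d)"
      using \<open>s1 < s2\<close> s1 by (simp add: algebra_simps)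
    moreover have "0 < s1/s2" "s1/s2 < 1" "p \<noteq> p + s2 *\<^sub>R d"
      using \<open>s1 < s2\<close> s1 \<open>s1 \<noteq> 0\<close> \<open>d \<noteq> 0\<close> by auto
    ultimately have "p + s1 *\<^sub>R d \<in> open_segment p (p + s2 *\<^sub>R d)"
      unfolding in_segment(2) by blast
    moreover have "p + s2 *\<^sub>R d \<in> closure K" using fr(2) by (simp add: frontier_def)
    ultimately have "p + s1 *\<^sub>R d \<in> interior K"
      using in_interior_closure_convex_segment[OF K p] by blast
    then show False using fr(1) by (simp add: frontier_def)
  qed
  then show ?thesis using assms(4-7) by (meson linorder_neqE_linordered_idom)
qed

lemma ray_exit_eqI:
  fixes K :: "'a::euclidean_space set"
  assumes K: "convex K" and p: "p \<in> interior K" and "q \<noteq> p"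
    and "z \<in> frontier K" and "0 \<le> t" and z: "z = p + t *\<^sub>R (q - p)"
  shows "ray_exit K p q = z"
  unfolding ray_exit_def
proof (rule the_equality)
  show "z \<in> frontier K \<and> (\<exists>t\<ge>0. z = p + t *\<^sub>R (q - p))" using assms by auto
next
  fix z' assume "z' \<in> frontier K \<and> (\<exists>t\<ge>0. z' = p + t *\<^sub>R (q - p))"
  then obtain t' where "0 \<le> t'" "z' = p + t' *\<^sub>R (q - p)" "z' \<in> frontier K" by auto
  with assms have "t' = t" using frontier_ray_unique[OF K p, of "q - p" t' t] by simp
  then show "z' = z" using z \<open>z' = p + t' *\<^sub>R (q - p)\<close> by simp
qed

lemma ray_exit_beyond:
  fixes K :: "'a::euclidean_space set"
  assumes "bounded K" and K: "convex K" and p: "p \<in> interior K" and q: "q \<in> interior K" and "q \<noteq> p"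
  obtains \<tau> where "1 < \<tau>" "ray_exit K p q = p + \<tau> *\<^sub>R (q - p)" "ray_exit K p q \<in> frontier K"
proof -
  obtain \<tau> where "0 < \<tau>" and fr: "p + \<tau> *\<^sub>R (q - p) \<in> frontier K"
    using ray_to_frontier[OF \<open>bounded K\<close> p, of "q - p"] \<open>q \<noteq> p\<close> by auto
  have "1 < \<tau>"
  proof (rule ccontr)
    assume "\<not> 1 < \<tau>"
    then have "(1 - \<tau>) *\<^sub>R p + \<tau> *\<^sub>R q \<in> interior K"
      using convexD[OF convex_interior[OF K] p q] \<open>0 < \<tau>\<close> by simp
    then show False using fr by (simp add: frontier_def algebra_simps)
  qed
  moreover have "ray_exit K p q = p + \<tau> *\<^sub>R (q - p)"
    by (rule ray_exit_eqI[OF K p \<open>q \<noteq> p\<close> fr, of \<tau>]) (use \<open>0 < \<tau>\<close> in auto)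
  ultimately show thesis using that fr by simp
qed

lemma hilbert_dist_commute: "hilbert_dist K x y = hilbert_dist K y x"
  unfolding hilbert_dist_def Let_def by (simp add: mult.commute eq_commute)

lemma affine_ratio_le_exit_ratio:
  fixes K :: "'a::euclidean_space set"
  assumes K: "compact K" "convex K" and y: "y \<in> interior K" and z: "z \<in> interior K" and "z \<noteq> y"
    and nonneg: "\<forall>v\<in>K. 0 \<le> c + m \<bullet> v" and "0 < c + m \<bullet> z"
  shows "(c + m \<bullet> y) / (c + m \<bullet> z) \<le> norm (y - ray_exit K y z) / norm (z - ray_exit K y z)"
proof -
  obtain \<tau> where "1 < \<tau>" and exit: "ray_exit K y z = y + \<tau> *\<^sub>R (z - y)" "ray_exit K y z \<in> frontier K"
    using ray_exit_beyond[OF compact_imp_bounded[OF K(1)] K(2) y z \<open>z \<noteq> y\<close>] by blast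
  have "ray_exit K y z \<in> K"
    using exit(2) frontier_subset_closed[OF compact_imp_closed[OF K(1)]] by blast
  then have "0 \<le> c + m \<bullet> y + \<tau> * (m \<bullet> (z - y))"
    using nonneg exit(1) by (force simp: inner_add_right add.assoc)
  then have "(c + m \<bullet> y) * (\<tau> - 1) \<le> \<tau> * (c + m \<bullet> z)"
    by (simp add: algebra_simps inner_diff_right)
  then have "(c + m \<bullet> y) / (c + m \<bullet> z) \<le> \<tau> / (\<tau> - 1)"
    using \<open>0 < c + m \<bullet> z\<close> \<open>1 < \<tau>\<close> by (simp add: divide_simps mult.commute)
  moreover have "y - ray_exit K y z = (-\<tau>) *\<^sub>R (z - y)" "z - ray_exit K y z = (1 - \<tau>) *\<^sub>R (z - y)"
    using exit(1) by (simp_all add: algebra_simps)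
  ultimately show ?thesis using \<open>1 < \<tau>\<close> \<open>z \<noteq> y\<close> by simp
qed

lemma hilbert_dist_ge_affine_cross_ratio:
  fixes K :: "'a::euclidean_space set"
  assumes K: "compact K" "convex K" and y: "y \<in> interior K" and z: "z \<in> interior K" and "y \<noteq> z"
    and h: "\<forall>v\<in>K. 0 \<le> ch + mh \<bullet> v" "0 < ch + mh \<bullet> y" "0 < ch + mh \<bullet> z"
    and g: "\<forall>v\<in>K. 0 \<le> cg + mg \<bullet> v" "0 < cg + mg \<bullet> y" "0 < cg + mg \<bullet> z"
  shows "(1/2) * ln ((ch + mh \<bullet> y) / (ch + mh \<bullet> z) * ((cg + mg \<bullet> z) / (cg + mg \<bullet> y)))
         \<le> hilbert_dist K y z"
proof -
  let ?y' = "ray_exit K y z" and ?z' = "ray_exit K z y"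
  let ?rh = "(ch + mh \<bullet> y) / (ch + mh \<bullet> z)" and ?rg = "(cg + mg \<bullet> z) / (cg + mg \<bullet> y)"
  have "?rh \<le> norm (y - ?y') / norm (z - ?y')"
    using affine_ratio_le_exit_ratio[OF K y z _ h(1,3)] \<open>y \<noteq> z\<close> by simp
  moreover have "?rg \<le> norm (z - ?z') / norm (y - ?z')"
    using affine_ratio_le_exit_ratio[OF K z y _ g(1,2)] \<open>y \<noteq> z\<close> by simp
  moreover have "0 < ?rh" "0 < ?rg" using h g by simp_all
  ultimately have "?rh * ?rg \<le> norm (z - ?z') / norm (y - ?z') * (norm (y - ?y') / norm (z - ?y'))"
    by (metis mult.commute mult_mono less_imp_le order_trans)
  with \<open>0 < ?rh\<close> \<open>0 < ?rg\<close>
  have "ln (?rh * ?rg) \<le> ln (norm (z - ?z') / norm (y - ?z') * (norm (y - ?y') / norm (z - ?y')))"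
    by (intro ln_mono) (simp_all only: mult_pos_pos)
  then show ?thesis unfolding hilbert_dist_def Let_def using \<open>y \<noteq> z\<close> by simp
qed

lemma affine_nonneg_pos_on_interior:
  fixes K :: "'a::euclidean_space set"
  assumes nonneg: "\<forall>v\<in>K. 0 \<le> c + m \<bullet> v" and "x \<in> K" "0 < c + m \<bullet> x" and z: "z \<in> interior K"
  shows "0 < c + m \<bullet> z"
proof (cases "m = 0")
  case True
  then show ?thesis using \<open>0 < c + m \<bullet> x\<close> by simp
next
  case False
  obtain \<epsilon> where "0 < \<epsilon>" "ball z \<epsilon> \<subseteq> K" using z mem_interior by blast
  define z' where "z' = z - (\<epsilon> / (2 * norm m)) *\<^sub>R m"
  have "z' \<in> K" using \<open>0 < \<epsilon>\<close> \<open>ball z \<epsilon> \<subseteq> K\<close> False by (auto simp: z'_def dist_norm)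
  then have "0 \<le> c + m \<bullet> z - (\<epsilon> / (2 * norm m)) * (norm m)\<^sup>2"
    using nonneg by (force simp: z'_def inner_diff_right power2_norm_eq_inner)
  moreover have "0 < (\<epsilon> / (2 * norm m)) * (norm m)\<^sup>2" using \<open>0 < \<epsilon>\<close> False by simp
  ultimately show ?thesis by linarith
qed

lemma nonneg_affine_zero_in_frontier:
  fixes K :: "'a::euclidean_space set"
  assumes nonneg: "\<forall>v\<in>K. 0 \<le> c + m \<bullet> v" and "x \<in> K" "0 < c + m \<bullet> x" and "z \<in> K" "c + m \<bullet> z \<le> 0"
  shows "z \<in> frontier K"
proof -
  have "z \<notin> interior K"
    using affine_nonneg_pos_on_interior[OF nonneg \<open>x \<in> K\<close> \<open>0 < c + m \<bullet> x\<close>] \<open>c + m \<bullet> z \<le> 0\<close> by fastforce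
  then show ?thesis using \<open>z \<in> K\<close> closure_subset by (auto simp: frontier_def)
qed

lemma hilbert_dist_nonneg:
  fixes K :: "'a::euclidean_space set"
  assumes K: "compact K" "convex K" and y: "y \<in> interior K" and "w \<in> K"
  shows "0 \<le> hilbert_dist K y w"
proof (cases "w \<in> interior K")
  case True
  show ?thesis
  proof (cases "w = y")
    case False
    then show ?thesis
      using hilbert_dist_ge_affine_cross_ratio[OF K y True, of 1 0 1 0] by simp
  qed (simp add: hilbert_dist_def)
next
  case False
  with \<open>w \<in> K\<close> have "w \<in> frontier K" "w \<noteq> y" using closure_subset y by (auto simp: frontier_def)
  then have "ray_exit K y w = w" using ray_exit_eqI[OF K(2) y, of w w 1] by simp
  then show ?thesis unfolding hilbert_dist_def Let_def by simp
qed

(* The Hilbert distance from 0 to s in the interval (-p, q). *)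
definition interval_hilbert_dist :: "real \<Rightarrow> real \<Rightarrow> real \<Rightarrow> real" where
  "interval_hilbert_dist p q s = (1/2) * ln ((s + p) * q / (p * (q - s)))"

lemma interval_hilbert_dist_strict_mono:
  assumes "0 < p" "0 < q" "-p < s" "s < s'" "s' < q"
  shows "interval_hilbert_dist p q s < interval_hilbert_dist p q s'"
proof -
  have "(s + p) / (q - s) < (s' + p) / (q - s)"
    using assms by (simp add: divide_strict_right_mono)
  also have "\<dots> \<le> (s' + p) / (q - s')"
    using assms by (intro divide_left_mono) simp_all
  finally have "q / p * ((s + p) / (q - s)) < q / p * ((s' + p) / (q - s'))"
    by (rule mult_strict_left_mono) (use assms in simp)
  moreover have "0 < q / p * ((s + p) / (q - s))" using assms by simp
  ultimately show ?thesis unfolding interval_hilbert_dist_def by (simp add: mult.commute)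
qed

lemma interval_hilbert_dist_attains:
  assumes "0 < p" "0 < q" "0 < \<alpha>"
  obtains t where "0 < t" "t < q" "interval_hilbert_dist p q t = \<alpha>"
proof
  define E where "E = exp (2 * \<alpha>)"
  define t where "t = p * q * (E - 1) / (q + E * p)"
  have "1 < E" using \<open>0 < \<alpha>\<close> by (simp add: E_def)
  have den: "0 < q + E * p" using assms \<open>1 < E\<close> by (simp add: add_pos_pos)
  have t: "t * (q + E * p) = p * q * (E - 1)" using den by (simp add: t_def)
  show "0 < t" using assms \<open>1 < E\<close> den by (simp add: t_def)
  have "q * (q + E * p) - p * q * (E - 1) = q * (q + p)" by (simp add: algebra_simps)
  moreover have "0 < q * (q + p)" using assms by simp
  ultimately have "p * q * (E - 1) < q * (q + E * p)" by linarith
  then show "t < q" using den by (simp add: t_def divide_less_eq)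
  have "(t + p) * q = E * (p * (q - t))"
    using t by (simp add: algebra_simps)
  then have "(t + p) * q / (p * (q - t)) = E" using assms \<open>t < q\<close> by simp
  then show "interval_hilbert_dist p q t = \<alpha>" by (simp add: interval_hilbert_dist_def E_def)
qed

lemma frontier_if_leaving_ray:
  fixes A :: "'a::real_normed_vector set"
  assumes "y \<in> A" "e \<noteq> 0" "0 < \<epsilon>" and leave: "\<And>s. 0 < s \<Longrightarrow> s < \<epsilon> \<Longrightarrow> y + s *\<^sub>R e \<notin> A"
  shows "y \<in> frontier A"
proof -
  have "y \<notin> interior A"
  proof
    assume "y \<in> interior A"
    then obtain r where "0 < r" "ball y r \<subseteq> A" using mem_interior by blast
    define s where "s = min (\<epsilon> / 2) (r / (2 * norm e))"
    have "0 < s" "s < \<epsilon>" using \<open>0 < \<epsilon>\<close> \<open>0 < r\<close> \<open>e \<noteq> 0\<close> by (simp_all add: s_def)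
    have "s * norm e < r"
      using \<open>0 < r\<close> \<open>e \<noteq> 0\<close> by (simp add: s_def min_def field_simps)
    then have "y + s *\<^sub>R e \<in> A"
      using \<open>ball y r \<subseteq> A\<close> \<open>0 < s\<close> by (auto simp: dist_norm)
    then show False using leave \<open>0 < s\<close> \<open>s < \<epsilon>\<close> by blast
  qed
  then show ?thesis using \<open>y \<in> A\<close> closure_subset by (auto simp: frontier_def)
qed

(* The zero sets of v \<mapsto> ch + mh \<bullet> v and v \<mapsto> cg + mg \<bullet> v are supporting hyperplanes of K
   at the ends x - p e and x + q e of the chord. *)
locale supported_chord =
  fixes K :: "'a::euclidean_space set" and x e :: 'a and p q :: real
    and ch :: real and mh :: 'a and cg :: real and mg :: 'a
  assumes compact_K: "compact K" and convex_K: "convex K" and x_interior: "x \<in> interior K"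
    and e_nonzero: "e \<noteq> 0" and p_pos: "0 < p" and q_pos: "0 < q"
    and left_end: "x - p *\<^sub>R e \<in> frontier K" and right_end: "x + q *\<^sub>R e \<in> frontier K"
    and h_nonneg: "\<forall>v\<in>K. 0 \<le> ch + mh \<bullet> v" and h_on_chord: "\<And>s. ch + mh \<bullet> (x + s *\<^sub>R e) = 1 + s / p"
    and g_nonneg: "\<forall>v\<in>K. 0 \<le> cg + mg \<bullet> v" and g_on_chord: "\<And>s. cg + mg \<bullet> (x + s *\<^sub>R e) = 1 - s / q"
begin

lemma chord_point_interior:
  assumes s: "0 < s" "s < q"
  shows "x + s *\<^sub>R e \<in> interior K"
proof -
  have "x + s *\<^sub>R e = (1 - s/q) *\<^sub>R x + (s/q) *\<^sub>R (x + q *\<^sub>R e)" "x \<noteq> x + q *\<^sub>R e" "0 < s/q" "s/q < 1"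
    using s e_nonzero by (auto simp: algebra_simps)
  then have "x + s *\<^sub>R e \<in> open_segment x (x + q *\<^sub>R e)" unfolding in_segment(2) by blast
  moreover have "x + q *\<^sub>R e \<in> closure K" using right_end by (simp add: frontier_def)
  ultimately show ?thesis using in_interior_closure_convex_segment[OF convex_K x_interior] by blast
qed

lemma hilbert_dist_chord_point:
  assumes s: "0 < s" "s < q"
  shows "hilbert_dist K x (x + s *\<^sub>R e) = interval_hilbert_dist p q s"
proof -
  define y where "y = x + s *\<^sub>R e"
  have "x \<noteq> y" using e_nonzero s by (simp add: y_def)
  have exit_y: "ray_exit K x y = x + q *\<^sub>R e"
    by (rule ray_exit_eqI[OF convex_K x_interior _ right_end, where t = "q / s"])
      (use s \<open>x \<noteq> y\<close> in \<open>auto simp: y_def\<close>)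
  have exit_x: "ray_exit K y x = x - p *\<^sub>R e"
  proof (rule ray_exit_eqI[OF convex_K _ _ left_end, where t = "(s + p) / s"])
    show "y \<in> interior K" using chord_point_interior[OF s] by (simp add: y_def)
    have "((s + p) / s) *\<^sub>R (x - y) = - ((s + p) *\<^sub>R e)" using s by (simp add: y_def)
    then show "x - p *\<^sub>R e = y + ((s + p) / s) *\<^sub>R (x - y)" by (simp add: y_def algebra_simps)
  qed (use s p_pos \<open>x \<noteq> y\<close> in auto)
  have "y - (x - p *\<^sub>R e) = (s + p) *\<^sub>R e" "y - (x + q *\<^sub>R e) = (s - q) *\<^sub>R e"
    by (simp_all add: y_def algebra_simps)
  then have "norm (y - (x - p *\<^sub>R e)) / norm (x - (x - p *\<^sub>R e))
      * (norm (x - (x + q *\<^sub>R e)) / norm (y - (x + q *\<^sub>R e))) = (s + p) * q / (p * (q - s))"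
    using s p_pos e_nonzero by simp
  then show ?thesis
    unfolding hilbert_dist_def Let_def interval_hilbert_dist_def y_def[symmetric]
    using exit_x exit_y \<open>x \<noteq> y\<close> by simp
qed

lemma hilbert_dist_chord_point_ge:
  assumes s: "0 < s" "s < q" and z: "z \<in> interior K" and hz: "ch + mh \<bullet> z \<le> cg + mg \<bullet> z"
  shows "interval_hilbert_dist p q s \<le> hilbert_dist K (x + s *\<^sub>R e) z"
proof -
  define y where "y = x + s *\<^sub>R e"
  let ?hy = "ch + mh \<bullet> y" and ?gy = "cg + mg \<bullet> y" and ?hz = "ch + mh \<bullet> z" and ?gz = "cg + mg \<bullet> z"
  have xK: "x \<in> K" using x_interior interior_subset by blast
  have pos_z: "0 < ?hz" "0 < ?gz"
    using affine_nonneg_pos_on_interior[OF h_nonneg xK _ z] affine_nonneg_pos_on_interior[OF g_nonneg xK _ z]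
      h_on_chord[of 0] g_on_chord[of 0] by simp_all
  have hy: "?hy = 1 + s / p" and gy: "?gy = 1 - s / q"
    using h_on_chord g_on_chord by (simp_all add: y_def)
  have "0 < s / p" "0 < s / q" "s / q < 1" using s p_pos by simp_all
  then have pos_y: "0 < ?hy" "0 < ?gy" using hy gy by simp_all
  have "y \<noteq> z"
  proof
    assume "y = z"
    then have "1 + s / p \<le> 1 - s / q" using hz hy gy by simp
    then show False using \<open>0 < s / p\<close> \<open>0 < s / q\<close> by linarith
  qed
  have ratio: "?hy / ?gy = (s + p) * q / (p * (q - s))"
  proof -
    have "q - s \<noteq> 0" using s by simp
    then show ?thesis unfolding hy gy using p_pos q_pos by (simp add: field_simps)
  qed
  have "?hy / ?gy * 1 \<le> ?hy / ?gy * (?gz / ?hz)"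
    using hz pos_y pos_z by (intro mult_left_mono) simp_all
  also have "\<dots> = ?hy / ?hz * (?gz / ?gy)" by simp
  moreover have "0 < (s + p) * q / (p * (q - s))" using s p_pos by simp
  ultimately have "ln ((s + p) * q / (p * (q - s))) \<le> ln (?hy / ?hz * (?gz / ?gy))"
    using ratio by (intro ln_mono) simp_all
  also have "(1/2) * \<dots> \<le> hilbert_dist K y z"
    using hilbert_dist_ge_affine_cross_ratio[OF compact_K convex_K _ z \<open>y \<noteq> z\<close>
        h_nonneg pos_y(1) pos_z(1) g_nonneg pos_y(2) pos_z(2)] chord_point_interior[OF s]
    by (simp add: y_def)
  finally show ?thesis unfolding interval_hilbert_dist_def y_def by simp
qed

lemma INF_hilbert_dist_chord_point:
  assumes "x \<in> G" "G \<subseteq> interior K" and hg: "\<And>z. z \<in> G \<Longrightarrow> ch + mh \<bullet> z \<le> cg + mg \<bullet> z"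
    and s: "0 < s" "s < q"
  shows "(INF z\<in>G. hilbert_dist K (x + s *\<^sub>R e) z) = interval_hilbert_dist p q s"
proof (rule cInf_eq_minimum)
  show "interval_hilbert_dist p q s \<in> hilbert_dist K (x + s *\<^sub>R e) ` G"
    using hilbert_dist_chord_point[OF s] \<open>x \<in> G\<close> by (metis hilbert_dist_commute image_eqI)
  fix d assume "d \<in> hilbert_dist K (x + s *\<^sub>R e) ` G"
  then obtain z where "z \<in> G" "d = hilbert_dist K (x + s *\<^sub>R e) z" by blast
  with \<open>G \<subseteq> interior K\<close> show "interval_hilbert_dist p q s \<le> d"
    using hilbert_dist_chord_point_ge[OF s _ hg] by blast
qed

lemma frontier_hilbert_nbhd_chord_point:
  assumes "x \<in> G" "G \<subseteq> interior K" and hg: "\<And>z. z \<in> G \<Longrightarrow> ch + mh \<bullet> z \<le> cg + mg \<bullet> z"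
    and "0 < \<alpha>"
  obtains y where "y \<in> frontier (hilbert_nbhd K G \<alpha>)" "hilbert_dist K x y = \<alpha>"
proof -
  note INF_eq = INF_hilbert_dist_chord_point[OF \<open>x \<in> G\<close> \<open>G \<subseteq> interior K\<close> hg]
  obtain t where "0 < t" "t < q" and t: "interval_hilbert_dist p q t = \<alpha>"
    using interval_hilbert_dist_attains[OF p_pos q_pos \<open>0 < \<alpha>\<close>] .
  have "x + t *\<^sub>R e \<in> hilbert_nbhd K G \<alpha>"
    using INF_eq chord_point_interior \<open>0 < t\<close> \<open>t < q\<close> t by (simp add: hilbert_nbhd_def)
  moreover have "(x + t *\<^sub>R e) + s *\<^sub>R e \<notin> hilbert_nbhd K G \<alpha>" if "0 < s" "s < q - t" for s
  proof -
    have "\<alpha> < interval_hilbert_dist p q (t + s)"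
      using interval_hilbert_dist_strict_mono[of p q t "t + s"] that \<open>0 < t\<close> p_pos q_pos t by simp
    moreover have "(x + t *\<^sub>R e) + s *\<^sub>R e = x + (t + s) *\<^sub>R e" by (simp add: algebra_simps)
    ultimately show ?thesis
      using INF_eq[of "t + s"] that \<open>0 < t\<close> by (simp only: hilbert_nbhd_def) auto
  qed
  ultimately have "x + t *\<^sub>R e \<in> frontier (hilbert_nbhd K G \<alpha>)"
    using frontier_if_leaving_ray[of _ _ e "q - t"] e_nonzero \<open>t < q\<close> by simp
  moreover have "hilbert_dist K x (x + t *\<^sub>R e) = \<alpha>"
    using hilbert_dist_chord_point[OF \<open>0 < t\<close> \<open>t < q\<close>] t by simp
  ultimately show thesis by (rule that)
qed

end

(* With u = q d and u' = - p d, the chord [u', u] passes through 0 with weight l = p / (p + q),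
   and n \<bullet> (l u) = (n \<bullet> d) p q / (p + q) is the quantity being maximised. *)
lemma extremal_chord_through_origin:
  fixes S :: "'a::euclidean_space set" and n :: 'a
  assumes "compact S" and S0: "0 \<in> interior S" and "n \<noteq> 0"
  obtains M l u u' where "0 < M" "0 < l" "l < 1" "u \<in> S" "u' \<in> S"
    "l *\<^sub>R u + (1 - l) *\<^sub>R u' = 0" "n \<bullet> (l *\<^sub>R u) = M"
    "\<And>s r v v'. 0 \<le> s \<Longrightarrow> 0 \<le> r \<Longrightarrow> v \<in> S \<Longrightarrow> v' \<in> S \<Longrightarrow> s *\<^sub>R v + r *\<^sub>R v' = 0
       \<Longrightarrow> n \<bullet> (s *\<^sub>R v) \<le> M * (s + r)"
proof -
  define f :: "real \<times> 'a \<times> 'a \<Rightarrow> 'a" where "f t = fst t *\<^sub>R fst (snd t) + (1 - fst t) *\<^sub>R snd (snd t)" for t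
  define F :: "real \<times> 'a \<times> 'a \<Rightarrow> real" where "F t = n \<bullet> (fst t *\<^sub>R fst (snd t))" for t
  define T where "T = ({0..1} \<times> S \<times> S) \<inter> {t. f t = 0}"
  have "closed {t. f t = 0}"
    by (rule closed_Collect_eq) (auto simp: f_def intro!: continuous_intros)
  then have "compact T"
    unfolding T_def by (intro compact_Int_closed compact_Times \<open>compact S\<close> compact_Icc)
  obtain \<epsilon> where "0 < \<epsilon>" "cball 0 \<epsilon> \<subseteq> S" using S0 mem_interior_cball by blast
  define v where "v = (\<epsilon> / norm n) *\<^sub>R n"
  have "v \<in> S" "-v \<in> S" using \<open>cball 0 \<epsilon> \<subseteq> S\<close> \<open>0 < \<epsilon>\<close> \<open>n \<noteq> 0\<close> by (auto simp: v_def)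
  then have vT: "(1/2, v, -v) \<in> T" by (simp add: T_def f_def)
  have "continuous_on T F" unfolding F_def by (intro continuous_intros)
  then obtain t0 where "t0 \<in> T" and max: "\<And>t. t \<in> T \<Longrightarrow> F t \<le> F t0"
    using continuous_attains_sup[OF \<open>compact T\<close>] vT by blast
  obtain l u u' where t0: "t0 = (l, u, u')" by (metis prod.exhaust)
  define M where "M = F t0"
  have "0 < F (1/2, v, -v)" using \<open>0 < \<epsilon>\<close> \<open>n \<noteq> 0\<close> by (simp add: F_def v_def)
  then have "0 < M" using max[OF vT] by (simp add: M_def)
  have l: "0 \<le> l" "l \<le> 1" and "u \<in> S" "u' \<in> S" and chord: "l *\<^sub>R u + (1 - l) *\<^sub>R u' = 0"
    using \<open>t0 \<in> T\<close> by (simp_all add: t0 T_def f_def)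
  have "n \<bullet> (l *\<^sub>R u) = M" by (simp add: M_def F_def t0)
  have "l \<noteq> 0" using \<open>n \<bullet> (l *\<^sub>R u) = M\<close> \<open>0 < M\<close> by auto
  moreover have "l \<noteq> 1" using chord \<open>n \<bullet> (l *\<^sub>R u) = M\<close> \<open>0 < M\<close> by auto
  ultimately have "0 < l" "l < 1" using l by simp_all
  moreover have "n \<bullet> (s *\<^sub>R w) \<le> M * (s + r)"
    if "0 \<le> s" "0 \<le> r" "w \<in> S" "w' \<in> S" "s *\<^sub>R w + r *\<^sub>R w' = 0" for s r w w'
  proof (cases "s + r = 0")
    case False
    then have "0 < s + r" using that by linarith
    have "(s / (s + r)) *\<^sub>R w + (1 - s / (s + r)) *\<^sub>R w' = (1 / (s + r)) *\<^sub>R (s *\<^sub>R w + r *\<^sub>R w')"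
      using \<open>0 < s + r\<close> by (simp add: field_simps scaleR_add_right)
    then have "(s / (s + r), w, w') \<in> T"
      using that \<open>0 < s + r\<close> by (simp add: T_def f_def)
    then have "F (s / (s + r), w, w') \<le> M" using max by (simp add: M_def)
    then have "s / (s + r) * (n \<bullet> w) \<le> M" by (simp add: F_def)
    then show ?thesis using \<open>0 < s + r\<close> by (simp add: field_simps)
  qed (use that in \<open>simp add: add_nonneg_eq_0_iff\<close>)
  ultimately show thesis
    using that \<open>0 < M\<close> \<open>u \<in> S\<close> \<open>u' \<in> S\<close> chord \<open>n \<bullet> (l *\<^sub>R u) = M\<close> by blast
qed

lemma separating_hyperplane_through_origin:
  fixes C B :: "('a::euclidean_space \<times> real) set"
  assumes "convex C" "convex B" "0 \<in> C" and B0: "\<And>t. t < 0 \<Longrightarrow> (0, t) \<in> B" and "C \<inter> B = {}"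
  obtains c k where "(c, k) \<noteq> 0" "k \<le> 0" "\<And>z. z \<in> C \<Longrightarrow> (c, k) \<bullet> z \<le> 0" "\<And>z. z \<in> B \<Longrightarrow> 0 \<le> (c, k) \<bullet> z"
proof -
  have "C \<noteq> {}" "B \<noteq> {}" using \<open>0 \<in> C\<close> B0[of "-1"] by auto
  then obtain a \<beta> where "a \<noteq> 0" and sepC: "\<forall>z\<in>C. a \<bullet> z \<le> \<beta>" and sepB: "\<forall>z\<in>B. \<beta> \<le> a \<bullet> z"
    using separating_hyperplane_sets[OF \<open>convex C\<close> \<open>convex B\<close> _ _ \<open>C \<inter> B = {}\<close>] by blast
  obtain c k where a: "a = (c, k)" by fastforce
  have "a \<bullet> 0 \<le> \<beta>" using sepC \<open>0 \<in> C\<close> by blast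
  then have "0 \<le> \<beta>" by simp
  have Bt: "\<beta> \<le> k * t" if "t < 0" for t
  proof -
    have "\<beta> \<le> a \<bullet> (0, t)" using sepB B0[OF that] by blast
    then show ?thesis by (simp add: a)
  qed
  have "\<beta> = 0"
  proof (rule ccontr)
    assume "\<beta> \<noteq> 0"
    with \<open>0 \<le> \<beta>\<close> Bt[of "-1"] have "k < 0" "0 < \<beta>" by simp_all
    then show False using Bt[of "\<beta> / (2 * k)"] by (simp add: divide_pos_neg)
  qed
  show thesis
  proof (rule that)
    show "(c, k) \<noteq> 0" "k \<le> 0" using \<open>a \<noteq> 0\<close> Bt[of "-1"] \<open>\<beta> = 0\<close> by (simp_all add: a)
  qed (use sepC sepB \<open>\<beta> = 0\<close> in \<open>simp_all add: a[symmetric]\<close>)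
qed

lemma nonvertical_hyperplane_separating_cone:
  fixes S :: "'a::euclidean_space set" and B :: "('a \<times> real) set"
  assumes "convex S" and S0: "0 \<in> interior S" and "convex B" and B0: "\<And>t. t < 0 \<Longrightarrow> (0, t) \<in> B"
    and disjoint: "cone hull (S \<times> {1}) \<inter> B = {}"
  obtains \<theta> where "\<And>u. u \<in> S \<Longrightarrow> \<theta> \<bullet> u \<le> 1" "\<And>w t. (w, t) \<in> B \<Longrightarrow> t \<le> \<theta> \<bullet> w"
proof -
  let ?C = "cone hull (S \<times> {1::real})"
  have "convex ?C" using \<open>convex S\<close> by (intro convex_cone_hull convex_Times) auto
  have "S \<times> {1::real} \<noteq> {}" using S0 interior_subset by blast
  then have "0 \<in> ?C" using cone_hull_contains_0 by blast
  obtain c k where "(c, k) \<noteq> 0" "k \<le> 0" and sepC: "\<And>z. z \<in> ?C \<Longrightarrow> (c, k) \<bullet> z \<le> 0"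
    and sepB: "\<And>z. z \<in> B \<Longrightarrow> 0 \<le> (c, k) \<bullet> z"
    using separating_hyperplane_through_origin[OF \<open>convex ?C\<close> \<open>convex B\<close> \<open>0 \<in> ?C\<close> B0 disjoint]
    by blast
  have Cu: "c \<bullet> u + k \<le> 0" if "u \<in> S" for u
    using sepC[of "(u, 1)"] hull_inc[of "(u, 1)" "S \<times> {1}" cone] that by simp
  have "k < 0"
  proof (rule ccontr)
    assume "\<not> k < 0"
    with \<open>k \<le> 0\<close> \<open>(c, k) \<noteq> 0\<close> have "k = 0" "c \<noteq> 0" by (simp_all add: zero_prod_def)
    obtain \<epsilon> where "0 < \<epsilon>" "cball 0 \<epsilon> \<subseteq> S" using S0 mem_interior_cball by blast
    then have "(\<epsilon> / norm c) *\<^sub>R c \<in> S" by auto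
    from Cu[OF this] have "(\<epsilon> / norm c) * (c \<bullet> c) \<le> 0" using \<open>k = 0\<close> by simp
    moreover have "0 < (\<epsilon> / norm c) * (c \<bullet> c)" using \<open>0 < \<epsilon>\<close> \<open>c \<noteq> 0\<close> by simp
    ultimately show False by linarith
  qed
  define \<theta> where "\<theta> = (1 / - k) *\<^sub>R c"
  have \<theta>: "\<theta> \<bullet> w = (c \<bullet> w) / (- k)" for w by (simp add: \<theta>_def)
  show thesis
  proof
    show "\<theta> \<bullet> u \<le> 1" if "u \<in> S" for u
      using Cu[OF that] \<open>k < 0\<close> by (simp add: \<theta> le_divide_eq)
    show "t \<le> \<theta> \<bullet> w" if "(w, t) \<in> B" for w t
      using sepB[OF that] \<open>k < 0\<close> by (simp add: \<theta> divide_simps algebra_simps)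
  qed
qed

(* Hahn-Banach sandwich: the cone over S \<times> {1} is, up to its boundary, the epigraph of the gauge
   \<rho> of S; the hypothesis says f w \<le> \<rho> w + \<rho> (- w), and \<theta> is a linear function with
   f w - \<rho> (- w) \<le> \<theta> w \<le> \<rho> w. *)
lemma linear_functional_sandwich:
  fixes S :: "'a::euclidean_space set" and f :: 'a
  assumes "convex S" and S0: "0 \<in> interior S"
    and le: "\<And>s r u u'. 0 \<le> s \<Longrightarrow> 0 \<le> r \<Longrightarrow> u \<in> S \<Longrightarrow> u' \<in> S \<Longrightarrow> s *\<^sub>R u + r *\<^sub>R u' = 0
       \<Longrightarrow> f \<bullet> (s *\<^sub>R u) \<le> s + r"
  obtains \<theta> where "\<And>u. u \<in> S \<Longrightarrow> \<theta> \<bullet> u \<le> 1" "\<And>u. u \<in> S \<Longrightarrow> (\<theta> - f) \<bullet> u \<le> 1"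
proof -
  define C where "C = cone hull (S \<times> {1::real})"
  define L :: "('a \<times> real) \<times> real \<Rightarrow> 'a \<times> real"
    where "L z = (- fst (fst z), - (f \<bullet> fst (fst z)) - snd (fst z) - snd z)" for z
  define B where "B = L ` (C \<times> {0<..})"
  have memC: "(w, r) \<in> C \<longleftrightarrow> (\<exists>s u. 0 \<le> s \<and> u \<in> S \<and> w = s *\<^sub>R u \<and> r = s)" for w r
    unfolding C_def cone_hull_expl by auto
  have memB: "(- w, t) \<in> B" if "(w, r) \<in> C" "t < - (f \<bullet> w) - r" for w r t
    unfolding B_def using that by (intro rev_image_eqI[of "((w, r), - (f \<bullet> w) - r - t)"]) (auto simp: L_def)
  have "linear L" by (auto simp: L_def linear_iff inner_add_right algebra_simps)
  then have "convex B"
    unfolding B_def C_def using \<open>convex S\<close>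
    by (intro convex_linear_image convex_Times convex_cone_hull) auto
  have "(0, 0) \<in> C" using S0 interior_subset memC by fastforce
  have "C \<inter> B = {}"
  proof -
    have False if cones: "(w, r) \<in> C" "(w', r') \<in> C" and "r < f \<bullet> w - r'" "w' = - w" for w r w' r'
    proof -
      obtain s u s' u' where "0 \<le> s" "u \<in> S" "w = s *\<^sub>R u" "r = s" "0 \<le> s'" "u' \<in> S" "w' = s' *\<^sub>R u'" "r' = s'"
        using cones memC by metis
      moreover from this have "s *\<^sub>R u + s' *\<^sub>R u' = 0"
        using \<open>w' = - w\<close> by (metis neg_eq_iff_add_eq_0)
      ultimately have "f \<bullet> w \<le> r + r'" using le by simp
      then show False using \<open>r < f \<bullet> w - r'\<close> by simp
    qed
    then show ?thesis by (fastforce simp: B_def L_def)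
  qed
  obtain \<theta> where \<theta>: "\<And>u. u \<in> S \<Longrightarrow> \<theta> \<bullet> u \<le> 1" and below: "\<And>w t. (w, t) \<in> B \<Longrightarrow> t \<le> \<theta> \<bullet> w"
    using nonvertical_hyperplane_separating_cone[OF \<open>convex S\<close> S0 \<open>convex B\<close> _ \<open>C \<inter> B = {}\<close>[unfolded C_def]]
      memB[OF \<open>(0, 0) \<in> C\<close>] by auto
  show thesis
  proof (rule that[OF \<theta>])
    fix u assume "u \<in> S"
    have "(u, 1) \<in> C" unfolding memC using \<open>u \<in> S\<close> by (intro exI[of _ 1] exI[of _ u]) simp
    then have "t \<le> - (\<theta> \<bullet> u)" if "t < - (f \<bullet> u) - 1" for t
      using below[OF memB] that by fastforce
    then have "- (f \<bullet> u) - 1 \<le> - (\<theta> \<bullet> u)" by (rule dense_le)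
    then show "(\<theta> - f) \<bullet> u \<le> 1" by (simp add: inner_diff_left)
  qed
qed

lemma chord_through_origin_with_supports:
  fixes S :: "'a::euclidean_space set" and n :: 'a
  assumes "compact S" "convex S" "0 \<in> interior S" "n \<noteq> 0"
  obtains e p q \<theta> \<phi> c where "0 < p" "0 < q" "q *\<^sub>R e \<in> S" "- (p *\<^sub>R e) \<in> S"
    "\<And>u. u \<in> S \<Longrightarrow> \<theta> \<bullet> u \<le> 1" "\<theta> \<bullet> (q *\<^sub>R e) = 1"
    "\<And>u. u \<in> S \<Longrightarrow> \<phi> \<bullet> u \<le> 1" "\<phi> \<bullet> (- (p *\<^sub>R e)) = 1"
    "0 < c" "\<theta> - \<phi> = c *\<^sub>R n"
proof -
  obtain M l u u' where "0 < M" "0 < l" "l < 1" "u \<in> S" "u' \<in> S"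
    and chord: "l *\<^sub>R u + (1 - l) *\<^sub>R u' = 0" and "n \<bullet> (l *\<^sub>R u) = M"
    and extremal: "\<And>s r v v'. 0 \<le> s \<Longrightarrow> 0 \<le> r \<Longrightarrow> v \<in> S \<Longrightarrow> v' \<in> S \<Longrightarrow> s *\<^sub>R v + r *\<^sub>R v' = 0
       \<Longrightarrow> n \<bullet> (s *\<^sub>R v) \<le> M * (s + r)"
    by (rule extremal_chord_through_origin[OF \<open>compact S\<close> \<open>0 \<in> interior S\<close> \<open>n \<noteq> 0\<close>]) (rule that)
  define f where "f = (1 / M) *\<^sub>R n"
  obtain \<theta> where \<theta>: "\<And>u. u \<in> S \<Longrightarrow> \<theta> \<bullet> u \<le> 1" and \<phi>: "\<And>u. u \<in> S \<Longrightarrow> (\<theta> - f) \<bullet> u \<le> 1"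
  proof (rule linear_functional_sandwich[OF \<open>convex S\<close> \<open>0 \<in> interior S\<close>])
    show "f \<bullet> (s *\<^sub>R v) \<le> s + r"
      if "0 \<le> s" "0 \<le> r" "v \<in> S" "v' \<in> S" "s *\<^sub>R v + r *\<^sub>R v' = 0" for s r v v'
      using extremal[OF that] \<open>0 < M\<close> by (simp add: f_def pos_divide_le_eq mult.commute)
  qed blast
  define e where "e = l *\<^sub>R u"
  define p where "p = 1 / (1 - l)"
  define q where "q = 1 / l"
  have "0 < p" "0 < q" using \<open>0 < l\<close> \<open>l < 1\<close> by (simp_all add: p_def q_def)
  have "f \<bullet> e = 1" using \<open>n \<bullet> (l *\<^sub>R u) = M\<close> \<open>0 < M\<close> by (simp add: f_def e_def)
  have u: "u = q *\<^sub>R e" using \<open>0 < l\<close> by (simp add: e_def q_def)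
  have "(1 - l) *\<^sub>R u' = - e" using chord by (simp add: e_def eq_neg_iff_add_eq_0 add.commute)
  then have "(1 / (1 - l)) *\<^sub>R ((1 - l) *\<^sub>R u') = - (p *\<^sub>R e)" by (simp add: p_def)
  then have u': "u' = - (p *\<^sub>R e)" using \<open>l < 1\<close> by simp
  have "\<theta> \<bullet> e = l"
  proof (rule antisym)
    show "\<theta> \<bullet> e \<le> l" using \<theta>[OF \<open>u \<in> S\<close>] \<open>0 < l\<close> by (simp add: e_def)
    have "(\<theta> - f) \<bullet> (- (p *\<^sub>R e)) \<le> 1" using \<phi>[OF \<open>u' \<in> S\<close>] u' by simp
    then show "l \<le> \<theta> \<bullet> e"
      using \<open>f \<bullet> e = 1\<close> \<open>l < 1\<close> by (simp add: p_def inner_diff_left field_simps)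
  qed
  show thesis
  proof (rule that[OF \<open>0 < p\<close> \<open>0 < q\<close> _ _ \<theta> _ \<phi>])
    show "q *\<^sub>R e \<in> S" "- (p *\<^sub>R e) \<in> S" using \<open>u \<in> S\<close> \<open>u' \<in> S\<close> u u' by simp_all
    show "\<theta> \<bullet> (q *\<^sub>R e) = 1" using \<open>\<theta> \<bullet> e = l\<close> \<open>0 < l\<close> by (simp add: q_def)
    show "(\<theta> - f) \<bullet> (- (p *\<^sub>R e)) = 1"
      using \<open>\<theta> \<bullet> e = l\<close> \<open>f \<bullet> e = 1\<close> \<open>l < 1\<close> by (simp add: p_def inner_diff_left field_simps)
    show "0 < 1 / M" "\<theta> - (\<theta> - f) = (1 / M) *\<^sub>R n" using \<open>0 < M\<close> by (simp_all add: f_def)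
  qed
qed

lemma chord_with_support_functionals:
  fixes K :: "'a::euclidean_space set"
  assumes K: "compact K" "convex K" and x: "x \<in> interior K" and "n \<noteq> 0"
  obtains e p q ch mh cg mg where "supported_chord K x e p q ch mh cg mg"
    "\<And>z. n \<bullet> z \<le> n \<bullet> x \<Longrightarrow> ch + mh \<bullet> z \<le> cg + mg \<bullet> z"
proof -
  define S where "S = (\<lambda>v. v - x) ` K"
  have memS: "u \<in> S \<longleftrightarrow> x + u \<in> K" for u
    by (auto simp: S_def image_iff algebra_simps)
  have "compact S" "convex S" using K by (simp_all add: S_def compact_translation_subtract)
  have "0 \<in> interior S" using x by (simp add: S_def interior_translation_subtract)
  obtain e p q \<theta> \<phi> c where "0 < p" "0 < q" "q *\<^sub>R e \<in> S" "- (p *\<^sub>R e) \<in> S"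
    and \<theta>: "\<And>u. u \<in> S \<Longrightarrow> \<theta> \<bullet> u \<le> 1" "\<theta> \<bullet> (q *\<^sub>R e) = 1"
    and \<phi>: "\<And>u. u \<in> S \<Longrightarrow> \<phi> \<bullet> u \<le> 1" "\<phi> \<bullet> (- (p *\<^sub>R e)) = 1"
    and "0 < c" "\<theta> - \<phi> = c *\<^sub>R n"
    by (rule chord_through_origin_with_supports[OF \<open>compact S\<close> \<open>convex S\<close> \<open>0 \<in> interior S\<close> \<open>n \<noteq> 0\<close>])
      (rule that)
  define cg where "cg = 1 + \<theta> \<bullet> x"
  define ch where "ch = 1 + \<phi> \<bullet> x"
  have g: "cg + (- \<theta>) \<bullet> z = 1 - \<theta> \<bullet> (z - x)" and h: "ch + (- \<phi>) \<bullet> z = 1 - \<phi> \<bullet> (z - x)" for z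
    by (simp_all add: cg_def ch_def inner_diff_right)
  have "\<theta> \<bullet> e = 1 / q" "\<phi> \<bullet> e = - (1 / p)" using \<theta>(2) \<phi>(2) \<open>0 < p\<close> \<open>0 < q\<close> by (simp_all add: field_simps)
  have "v - x \<in> S" if "v \<in> K" for v using memS that by simp
  then have g_nonneg: "\<forall>v\<in>K. 0 \<le> cg + (- \<theta>) \<bullet> v" and h_nonneg: "\<forall>v\<in>K. 0 \<le> ch + (- \<phi>) \<bullet> v"
    unfolding g h using \<theta>(1) \<phi>(1) by fastforce+
  have g_chord: "cg + (- \<theta>) \<bullet> (x + s *\<^sub>R e) = 1 - s / q" and h_chord: "ch + (- \<phi>) \<bullet> (x + s *\<^sub>R e) = 1 + s / p" for s
    unfolding g h using \<open>\<theta> \<bullet> e = 1 / q\<close> \<open>\<phi> \<bullet> e = - (1 / p)\<close> by simp_all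
  have "x \<in> K" using x interior_subset by blast
  have "supported_chord K x e p q ch (- \<phi>) cg (- \<theta>)"
  proof
    show "e \<noteq> 0" using \<theta>(2) by auto
    show "x - p *\<^sub>R e \<in> frontier K"
    proof (rule nonneg_affine_zero_in_frontier[OF h_nonneg \<open>x \<in> K\<close>])
      show "x - p *\<^sub>R e \<in> K" using \<open>- (p *\<^sub>R e) \<in> S\<close> by (simp add: memS)
      show "ch + (- \<phi>) \<bullet> (x - p *\<^sub>R e) \<le> 0" using h_chord[of "- p"] \<open>0 < p\<close> by simp
    qed (use h_chord[of 0] in simp)
    show "x + q *\<^sub>R e \<in> frontier K"
    proof (rule nonneg_affine_zero_in_frontier[OF g_nonneg \<open>x \<in> K\<close>])
      show "x + q *\<^sub>R e \<in> K" using \<open>q *\<^sub>R e \<in> S\<close> by (simp add: memS)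
      show "cg + (- \<theta>) \<bullet> (x + q *\<^sub>R e) \<le> 0" using g_chord[of q] \<open>0 < q\<close> by simp
    qed (use g_chord[of 0] in simp)
  qed (use K x \<open>0 < p\<close> \<open>0 < q\<close> h_nonneg h_chord g_nonneg g_chord in blast)+
  moreover have "ch + (- \<phi>) \<bullet> z \<le> cg + (- \<theta>) \<bullet> z" if "n \<bullet> z \<le> n \<bullet> x" for z
  proof -
    have "c * (n \<bullet> z) \<le> c * (n \<bullet> x)" using that \<open>0 < c\<close> by simp
    then have "(\<theta> - \<phi>) \<bullet> z \<le> (\<theta> - \<phi>) \<bullet> x" using \<open>\<theta> - \<phi> = c *\<^sub>R n\<close> by simp
    then show ?thesis unfolding g h by (simp add: inner_diff_left inner_diff_right)
  qed
  ultimately show thesis by (rule that)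
qed

lemma frontier_hilbert_nbhd_point_at_distance:
  fixes K G :: "'a::euclidean_space set"
  assumes K: "compact K" "convex K" and G: "compact G" "convex G" "interior G \<noteq> {}"
    and "G \<subseteq> interior K" and "0 < \<alpha>" and xG: "x \<in> frontier G"
  obtains y where "y \<in> frontier (hilbert_nbhd K G \<alpha>)" "hilbert_dist K x y = \<alpha>"
proof -
  have "x \<in> G" using xG frontier_subset_closed[OF compact_imp_closed[OF G(1)]] by blast
  then have x: "x \<in> interior K" using \<open>G \<subseteq> interior K\<close> by blast
  have "x \<notin> rel_interior G" using xG rel_interior_nonempty_interior[OF G(3)] by (simp add: frontier_def)
  moreover have "x \<in> closure G" using \<open>x \<in> G\<close> closure_subset by blast
  ultimately obtain a where "a \<noteq> 0" and support: "\<And>z. z \<in> closure G \<Longrightarrow> a \<bullet> x \<le> a \<bullet> z"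
    using supporting_hyperplane_relative_frontier[OF G(2)] by metis
  have "- a \<noteq> 0" using \<open>a \<noteq> 0\<close> by simp
  obtain e p q ch mh cg mg where chord: "supported_chord K x e p q ch mh cg mg"
    and hg: "\<And>z. (- a) \<bullet> z \<le> (- a) \<bullet> x \<Longrightarrow> ch + mh \<bullet> z \<le> cg + mg \<bullet> z"
    by (rule chord_with_support_functionals[OF K x \<open>- a \<noteq> 0\<close>]) (rule that)
  have hg_G: "ch + mh \<bullet> z \<le> cg + mg \<bullet> z" if "z \<in> G" for z
  proof (rule hg)
    show "(- a) \<bullet> z \<le> (- a) \<bullet> x" using support[of z] that closure_subset by auto
  qed
  obtain y where "y \<in> frontier (hilbert_nbhd K G \<alpha>)" "hilbert_dist K x y = \<alpha>"
    using supported_chord.frontier_hilbert_nbhd_chord_point[OF chord \<open>x \<in> G\<close> \<open>G \<subseteq> interior K\<close> hg_G \<open>0 < \<alpha>\<close>]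
    by blast
  then show thesis by (rule that)
qed

lemma INF_hilbert_dist_le:
  fixes K :: "'a::euclidean_space set"
  assumes "compact K" "convex K" "z \<in> interior K" "A \<subseteq> K" "y \<in> A"
  shows "(INF w\<in>A. hilbert_dist K z w) \<le> hilbert_dist K z y"
proof (rule cInf_lower)
  show "bdd_below (hilbert_dist K z ` A)"
    using hilbert_dist_nonneg[OF assms(1-3)] \<open>A \<subseteq> K\<close> by (intro bdd_belowI[of _ 0]) auto
qed (use \<open>y \<in> A\<close> in simp)

theorem lemma8p4:
  fixes K G :: "'a::euclidean_space set" and \<alpha> :: real
  assumes "convex_body K" and "convex_body G" and "G \<subseteq> interior K"
    and "0 < \<alpha>" and "\<alpha> \<le> 1"
  shows "(\<forall>x\<in>frontier G. \<exists>y\<in>frontier (hilbert_nbhd K G \<alpha>). hilbert_dist K x y = \<alpha>)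
       \<and> frontier G \<subseteq> {z. (INF w\<in>frontier (hilbert_nbhd K G \<alpha>). hilbert_dist K z w) \<le> \<alpha>}"
proof -
  have K: "compact K" "convex K" and G: "compact G" "convex G" "interior G \<noteq> {}"
    using assms(1,2) by (simp_all add: convex_body_def)
  have at_distance: "\<exists>y\<in>frontier (hilbert_nbhd K G \<alpha>). hilbert_dist K x y = \<alpha>" if "x \<in> frontier G" for x
    using frontier_hilbert_nbhd_point_at_distance[OF K G \<open>G \<subseteq> interior K\<close> \<open>0 < \<alpha>\<close> that] by blast
  have "hilbert_nbhd K G \<alpha> \<subseteq> K" using interior_subset by (auto simp: hilbert_nbhd_def)
  then have "frontier (hilbert_nbhd K G \<alpha>) \<subseteq> K"
    using closure_minimal[OF _ compact_imp_closed[OF K(1)]] by (auto simp: frontier_def)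
  moreover have "frontier G \<subseteq> interior K"
    using frontier_subset_closed[OF compact_imp_closed[OF G(1)]] \<open>G \<subseteq> interior K\<close> by blast
  ultimately have "(INF w\<in>frontier (hilbert_nbhd K G \<alpha>). hilbert_dist K x w) \<le> \<alpha>" if "x \<in> frontier G" for x
    using at_distance[OF that] INF_hilbert_dist_le[OF K] that by (metis subsetD)
  then show ?thesis using at_distance by blast
qed

end
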